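(* Let $A\in \mathbb{Z}^{m\times n}$, $b\in \mathbb{Z}^m$, and suppose $P:=\{x:Ax\leq b\}$ is nonempty. For a nonempty face $F$ of $P$, let $A_Fx\le b_F$ be the subsystem of $Ax\le b$ consisting of the inequalities satisfied with equality by all points of $F$. Then the following are equivalent for a prime $p$: (1) $P$ is a $p$-adic polyhedron; (2) for every nonempty face $F$ of $P$, the affine hull of $F$ contains a $p$-adic point; (3) for every nonempty face $F$ of $P$ and every real vector $z$, if $A_F^\top z$ is integral then $b_F^\top z$ is $p$-adic; (4) for all $w\in\mathbb{R}^n$ for which $\max\{w^\top x:x\in P\}$ has an optimum, it has a $p$-adic optimal solution; (5) for all $w\in\mathbb{Z}^n$ for which $\max\{w^\top x:x\in P\}$ has an optimum, its optimal value is $p$-adic.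
   Context: A $p$-adic rational is a number $a/p^k$ with $a,k\in\mathbb{Z}$, $k\ge0$; a vector is $p$-adic if all entries are $p$-adic rationals. A nonempty rational polyhedron is $p$-adic if every nonempty face of it contains a $p$-adic point. *)

theory Defs
  imports "HOL-Analysis.Analysis" "HOL-Computational_Algebra.Primes"
begin

definition padic_rat :: "nat \<Rightarrow> real \<Rightarrow> bool" where
  "padic_rat p q \<longleftrightarrow> (\<exists>(a::int) (k::nat). q = of_int a / of_nat p ^ k)"

definition padic_vec :: "nat \<Rightarrow> real ^ 'n \<Rightarrow> bool" where
  "padic_vec p x \<longleftrightarrow> (\<forall>i. padic_rat p (x $ i))"

definition rational_polyhedron :: "(real ^ 'n) set \<Rightarrow> bool" where
  "rational_polyhedron P \<longleftrightarrow>
     (\<exists>cs :: ((real ^ 'n) \<times> real) list.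
        (\<forall>(a, \<beta>) \<in> set cs. (\<forall>i. a $ i \<in> \<rat>) \<and> \<beta> \<in> \<rat>) \<and>
        P = {x. \<forall>(a, \<beta>) \<in> set cs. a \<bullet> x \<le> \<beta>})"

definition padic_polyhedron :: "nat \<Rightarrow> (real ^ 'n) set \<Rightarrow> bool" where
  "padic_polyhedron p P \<longleftrightarrow> rational_polyhedron P \<and> P \<noteq> {} \<and>
     (\<forall>F. F face_of P \<and> F \<noteq> {} \<longrightarrow> (\<exists>x\<in>F. padic_vec p x))"

definition polyh :: "int ^ 'n ^ 'm \<Rightarrow> int ^ 'm \<Rightarrow> (real ^ 'n) set" where
  "polyh A b = {x. \<forall>i. (\<Sum>j\<in>UNIV. of_int (A $ i $ j) * x $ j) \<le> of_int (b $ i)}"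

definition tight_rows :: "int ^ 'n ^ 'm \<Rightarrow> int ^ 'm \<Rightarrow> (real ^ 'n) set \<Rightarrow> 'm set" where
  "tight_rows A b F = {i. \<forall>x\<in>F. (\<Sum>j\<in>UNIV. of_int (A $ i $ j) * x $ j) = of_int (b $ i)}"

definition is_max_sol :: "(real ^ 'n) set \<Rightarrow> real ^ 'n \<Rightarrow> real ^ 'n \<Rightarrow> bool" where
  "is_max_sol P w x \<longleftrightarrow> x \<in> P \<and> (\<forall>y\<in>P. w \<bullet> y \<le> w \<bullet> x)"

end

theory Submission
  imports Defs
begin

text \<open>
  The heart of the proof is a density statement for an integer system \<open>M x = c\<close>: if \<open>z\<^sup>T c\<close> is
  p-adic whenever \<open>z\<^sup>T M\<close> is integral, then the p-adic solutions are dense among the real ones. Integer column operations \<open>x\<^sub>a := x\<^sub>a - s x\<^sub>b\<close>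
  preserve hypothesis and conclusion, and by Euclid's algorithm they reduce the next row to a single
  nonzero entry \<open>g\<close>; testing the hypothesis with \<open>z = e\<^sub>i / g\<close> shows that the value \<open>c\<^sub>i / g\<close>
  forced on the corresponding variable is p-adic, and the variable is eliminated.

  Given a face \<open>F\<close>, a relative interior point \<open>y\<close> satisfies all inequalities that are not tight
  on \<open>F\<close> strictly. Hence a p-adic solution \<open>x\<close> of the tight equations close to \<open>y\<close> lies in
  the polyhedron together with its reflection \<open>2y - x\<close>, and since \<open>y\<close> is their midpoint, \<open>x\<close>
  lies in \<open>F\<close>. The other implications are routine: sets of optimal solutions are faces, and
  conversely every face is the optimal set of the integral objective \<open>u\<^sup>T A\<^sub>F\<close> for suitable
  nonnegative multipliers \<open>u\<close>.
\<close>

section \<open>p-adic rationals\<close>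

lemma padic_rat_of_int [simp]: "padic_rat p (of_int a)"
  unfolding padic_rat_def by (rule exI[of _ a], rule exI[of _ 0]) simp

lemma padic_rat_Ints: "x \<in> \<int> \<Longrightarrow> padic_rat p x"
  by (metis Ints_cases padic_rat_of_int)

lemma padic_rat_add:
  assumes "p > 0" "padic_rat p x" "padic_rat p y"
  shows "padic_rat p (x + y)"
proof -
  obtain a k c l where x: "x = of_int a / of_nat p ^ k" and y: "y = of_int c / of_nat p ^ l"
    using assms(2,3) unfolding padic_rat_def by blast
  have "x + y = of_int (a * int p ^ l + c * int p ^ k) / of_nat p ^ (k + l)"
    using assms(1) by (simp add: x y field_simps power_add)
  then show ?thesis unfolding padic_rat_def by blast
qed

lemma padic_rat_mult:
  assumes "p > 0" "padic_rat p x" "padic_rat p y"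
  shows "padic_rat p (x * y)"
proof -
  obtain a k c l where x: "x = of_int a / of_nat p ^ k" and y: "y = of_int c / of_nat p ^ l"
    using assms(2,3) unfolding padic_rat_def by blast
  have "x * y = of_int (a * c) / of_nat p ^ (k + l)"
    using assms(1) by (simp add: x y power_add)
  then show ?thesis unfolding padic_rat_def by blast
qed

lemma padic_rat_minus: "padic_rat p x \<Longrightarrow> padic_rat p (- x)"
  unfolding padic_rat_def by (metis minus_divide_left of_int_minus)

lemma padic_rat_diff: "p > 0 \<Longrightarrow> padic_rat p x \<Longrightarrow> padic_rat p y \<Longrightarrow> padic_rat p (x - y)"
  using padic_rat_add[of p x "- y"] padic_rat_minus[of p y] by simp

lemma padic_rat_sum:
  "p > 0 \<Longrightarrow> (\<And>i. i \<in> S \<Longrightarrow> padic_rat p (f i)) \<Longrightarrow> padic_rat p (sum f S)"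
  by (induction S rule: infinite_finite_induct)
    (auto simp: padic_rat_add padic_rat_of_int[of p 0, simplified])

lemma padic_rat_inner_Ints:
  assumes "p > 0" "\<forall>j. c $ j \<in> \<int>" "padic_vec p x"
  shows "padic_rat p (c \<bullet> x)"
  unfolding inner_vec_def inner_real_def using assms
  by (intro padic_rat_sum padic_rat_mult) (auto simp: padic_rat_Ints padic_vec_def)

lemma padic_rat_dense:
  assumes "1 < p" "e > 0"
  shows "\<exists>q. padic_rat p q \<and> \<bar>q - r\<bar> < e"
proof -
  obtain k where k: "1 / e < real p ^ k"
    using real_arch_pow[of "real p"] assms(1) by auto
  define N where "N = real p ^ k"
  have "N > 0" using assms(1) by (simp add: N_def)
  define q where "q = of_int \<lfloor>r * N\<rfloor> / N"
  have "padic_rat p q" unfolding padic_rat_def q_def N_def by blast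
  moreover have "\<bar>q - r\<bar> = \<bar>of_int \<lfloor>r * N\<rfloor> - r * N\<bar> / N"
    using \<open>N > 0\<close> by (simp add: q_def field_simps)
  moreover have "\<bar>of_int \<lfloor>r * N\<rfloor> - r * N\<bar> < 1" by linarith
  moreover have "1 / N < e" using k assms(2) \<open>N > 0\<close> by (simp add: N_def field_simps)
  ultimately show ?thesis
    using \<open>N > 0\<close> by (metis divide_strict_right_mono order.strict_trans)
qed

section \<open>Dense p-adic solutions of integer linear systems\<close>

definition solves :: "'i set \<Rightarrow> 'j set \<Rightarrow> ('i \<Rightarrow> 'j \<Rightarrow> int) \<Rightarrow> ('i \<Rightarrow> real) \<Rightarrow> ('j \<Rightarrow> real) \<Rightarrow> bool"
  where "solves I J M c x \<longleftrightarrow> (\<forall>i\<in>I. (\<Sum>j\<in>J. of_int (M i j) * x j) = c i)"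

definition padic_on :: "nat \<Rightarrow> 'j set \<Rightarrow> ('j \<Rightarrow> real) \<Rightarrow> bool"
  where "padic_on p J x \<longleftrightarrow> (\<forall>j\<in>J. padic_rat p (x j))"

definition padic_dual :: "nat \<Rightarrow> 'i set \<Rightarrow> 'j set \<Rightarrow> ('i \<Rightarrow> 'j \<Rightarrow> int) \<Rightarrow> ('i \<Rightarrow> real) \<Rightarrow> bool"
  where "padic_dual p I J M c \<longleftrightarrow>
    (\<forall>z. (\<forall>j\<in>J. (\<Sum>i\<in>I. z i * of_int (M i j)) \<in> \<int>) \<longrightarrow> padic_rat p (\<Sum>i\<in>I. z i * c i))"

definition padic_solutions_dense :: "nat \<Rightarrow> 'i set \<Rightarrow> 'j set \<Rightarrow> ('i \<Rightarrow> 'j \<Rightarrow> int) \<Rightarrow> ('i \<Rightarrow> real) \<Rightarrow> bool"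
  where "padic_solutions_dense p I J M c \<longleftrightarrow>
    (\<forall>y e. solves I J M c y \<longrightarrow> e > 0 \<longrightarrow>
       (\<exists>x. padic_on p J x \<and> solves I J M c x \<and> (\<forall>j\<in>J. \<bar>x j - y j\<bar> < e)))"

lemma padic_solutions_dense_empty:
  fixes M :: "'i \<Rightarrow> 'j \<Rightarrow> int"
  assumes "1 < p"
  shows "padic_solutions_dense p {} J M c"
  unfolding padic_solutions_dense_def
proof (intro allI impI)
  fix y :: "'j \<Rightarrow> real" and e :: real
  assume "e > 0"
  then have "\<forall>j. \<exists>q. padic_rat p q \<and> \<bar>q - y j\<bar> < e"
    using padic_rat_dense[OF assms] by blast
  then obtain x where "\<forall>j. padic_rat p (x j) \<and> \<bar>x j - y j\<bar> < e"
    by metis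
  then show "\<exists>x. padic_on p J x \<and> solves {} J M c x \<and> (\<forall>j\<in>J. \<bar>x j - y j\<bar> < e)"
    by (auto simp: padic_on_def solves_def)
qed

lemma padic_dual_subset:
  fixes M :: "'i \<Rightarrow> 'j \<Rightarrow> int"
  assumes "padic_dual p I' J M c" "finite I'" "I \<subseteq> I'"
  shows "padic_dual p I J M c"
  unfolding padic_dual_def
proof (intro allI impI)
  fix z :: "'i \<Rightarrow> real"
  define z' where "z' i = (if i \<in> I then z i else 0)" for i
  have sum_z': "(\<Sum>i\<in>I'. z' i * f i) = (\<Sum>i\<in>I. z i * f i)" for f :: "'i \<Rightarrow> real"
    using assms(2,3) by (intro sum.mono_neutral_cong_right) (auto simp: z'_def)
  assume "\<forall>j\<in>J. (\<Sum>i\<in>I. z i * of_int (M i j)) \<in> \<int>"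
  then show "padic_rat p (\<Sum>i\<in>I. z i * c i)"
    using assms(1) unfolding padic_dual_def sum_z'[symmetric] by blast
qed

lemma padic_solutions_dense_insert_zero_row:
  assumes "\<forall>j\<in>J. M i j = 0" "padic_solutions_dense p I J M c"
  shows "padic_solutions_dense p (insert i I) J M c"
proof -
  have "solves (insert i I) J M c x \<longleftrightarrow> solves I J M c x" if "solves (insert i I) J M c y" for x y
    using that assms(1) by (simp add: solves_def)
  then show ?thesis using assms(2) unfolding padic_solutions_dense_def by meson
qed

definition column_op :: "('i \<Rightarrow> 'j \<Rightarrow> int) \<Rightarrow> 'j \<Rightarrow> 'j \<Rightarrow> int \<Rightarrow> 'i \<Rightarrow> 'j \<Rightarrow> int"
  where "column_op M a b s i j = (if j = b then M i b - s * M i a else M i j)"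

lemma sum_column_op:
  fixes M :: "'i \<Rightarrow> 'j \<Rightarrow> int" and x :: "'j \<Rightarrow> real"
  assumes "finite J" "a \<in> J" "b \<in> J" "a \<noteq> b"
  shows "(\<Sum>j\<in>J. of_int (column_op M a b s i j) * x j) =
         (\<Sum>j\<in>J. of_int (M i j) * (x(a := x a - of_int s * x b)) j)"
proof -
  have "(\<Sum>j\<in>J. of_int (column_op M a b s i j) * x j) =
        (\<Sum>j\<in>J. of_int (M i j) * x j - (if j = b then of_int s * of_int (M i a) * x b else 0))"
    by (intro sum.cong) (auto simp: column_op_def algebra_simps)
  also have "\<dots> = (\<Sum>j\<in>J. of_int (M i j) * x j) - of_int s * of_int (M i a) * x b"
    using assms by (simp add: sum_subtractf)
  also have "\<dots> = (\<Sum>j\<in>J. of_int (M i j) * x j - (if j = a then of_int s * of_int (M i a) * x b else 0))"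
    using assms by (simp add: sum_subtractf)
  also have "\<dots> = (\<Sum>j\<in>J. of_int (M i j) * (x(a := x a - of_int s * x b)) j)"
    by (intro sum.cong) (auto simp: algebra_simps)
  finally show ?thesis .
qed

lemma solves_column_op:
  assumes "finite J" "a \<in> J" "b \<in> J" "a \<noteq> b"
  shows "solves I J (column_op M a b s) c x \<longleftrightarrow> solves I J M c (x(a := x a - of_int s * x b))"
  unfolding solves_def sum_column_op[OF assms] ..

lemma padic_dual_column_op:
  fixes M :: "'i \<Rightarrow> 'j \<Rightarrow> int"
  assumes "padic_dual p I J M c" "a \<in> J" "b \<in> J" "a \<noteq> b"
  shows "padic_dual p I J (column_op M a b s) c"
  unfolding padic_dual_def
proof (intro allI impI)
  fix z :: "'i \<Rightarrow> real"
  let ?col = "\<lambda>M j. \<Sum>i\<in>I. z i * of_int (M i j)"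
  assume int: "\<forall>j\<in>J. ?col (column_op M a b s) j \<in> \<int>"
  have "?col M j \<in> \<int>" if "j \<in> J" for j
  proof (cases "j = b")
    case True
    have "?col M b = ?col (column_op M a b s) b + of_int s * ?col (column_op M a b s) a"
      using assms(4) by (simp add: column_op_def sum_distrib_left algebra_simps sum.distrib[symmetric])
    then show ?thesis using int assms(2,3) True by simp
  next
    case False
    then show ?thesis using bspec[OF int that] by (simp add: column_op_def)
  qed
  then show "padic_rat p (\<Sum>i\<in>I. z i * c i)" using assms(1) unfolding padic_dual_def by blast
qed

lemma padic_solutions_dense_column_op:
  fixes M :: "'i \<Rightarrow> 'j \<Rightarrow> int"
  assumes "padic_solutions_dense p I J (column_op M a b s) c"
    and "p > 0" "finite J" "a \<in> J" "b \<in> J" "a \<noteq> b"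
  shows "padic_solutions_dense p I J M c"
  unfolding padic_solutions_dense_def
proof (intro allI impI)
  fix y :: "'j \<Rightarrow> real" and e :: real
  assume y: "solves I J M c y" and "e > 0"
  let ?T = "\<lambda>x. x(a := x a - of_int s * x b)"
  \<comment> \<open>errors below \<open>e / (1 + \<bar>s\<bar>)\<close> in \<open>x a\<close> and \<open>x b\<close> leave an error below \<open>e\<close> in \<open>?T x a\<close>\<close>
  define y' where "y' = y(a := y a + of_int s * y b)"
  have "?T y' = y" using assms(6) by (auto simp: y'_def)
  then have "solves I J (column_op M a b s) c y'"
    using y solves_column_op[OF assms(3-6)] by metis
  moreover have "e / (1 + \<bar>of_int s\<bar>) > 0" using \<open>e > 0\<close> by simp
  ultimately obtain x where x: "padic_on p J x" "solves I J (column_op M a b s) c x"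
    and close: "\<forall>j\<in>J. \<bar>x j - y' j\<bar> < e / (1 + \<bar>of_int s\<bar>)"
    using assms(1) unfolding padic_solutions_dense_def by blast
  have "padic_on p J (?T x)"
    using x(1) assms(2,4,5) unfolding padic_on_def
    by (auto intro!: padic_rat_diff padic_rat_mult padic_rat_of_int)
  moreover have "solves I J M c (?T x)" using x(2) solves_column_op[OF assms(3-6)] by blast
  moreover have "\<bar>?T x j - y j\<bar> < e" if "j \<in> J" for j
  proof (cases "j = a")
    case True
    have "?T x a - y a = (x a - y' a) - of_int s * (x b - y' b)"
      using assms(6) by (simp add: y'_def algebra_simps)
    also have "\<bar>\<dots>\<bar> \<le> \<bar>x a - y' a\<bar> + \<bar>of_int s\<bar> * \<bar>x b - y' b\<bar>"
      by (metis abs_mult abs_triangle_ineq4)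
    also have "\<dots> < e / (1 + \<bar>of_int s\<bar>) + \<bar>of_int s\<bar> * (e / (1 + \<bar>of_int s\<bar>))"
      using close assms(4,5) by (intro add_less_le_mono mult_left_mono) (auto intro: less_imp_le)
    also have "\<dots> = e"
    proof -
      have "1 + \<bar>of_int s\<bar> \<noteq> (0::real)" by linarith
      then show ?thesis by (simp add: divide_simps) (simp add: algebra_simps)
    qed
    finally show ?thesis using True by simp
  next
    case False
    have "e / (1 + \<bar>of_int s\<bar>) \<le> e" using \<open>e > 0\<close> by (simp add: divide_le_eq)
    then show ?thesis using close that False by (auto simp: y'_def)
  qed
  ultimately show "\<exists>x. padic_on p J x \<and> solves I J M c x \<and> (\<forall>j\<in>J. \<bar>x j - y j\<bar> < e)" by blast
qed

lemma column_op_decreases_row_weight: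
  fixes M :: "'i \<Rightarrow> 'j \<Rightarrow> int"
  assumes "finite J" "a \<in> J" "b \<in> J" "M i a \<noteq> 0" "\<bar>M i a\<bar> \<le> \<bar>M i b\<bar>"
  shows "(\<Sum>j\<in>J. nat \<bar>column_op M a b (sgn (M i a * M i b)) i j\<bar>) < (\<Sum>j\<in>J. nat \<bar>M i j\<bar>)"
proof -
  have "\<bar>M i b - sgn (M i a * M i b) * M i a\<bar> < \<bar>M i b\<bar>"
    using assms(4,5) by (cases "M i a > 0"; cases "M i b > 0") (auto simp: sgn_mult)
  then have "nat \<bar>column_op M a b (sgn (M i a * M i b)) i b\<bar> < nat \<bar>M i b\<bar>"
    by (simp add: column_op_def)
  then show ?thesis
    using assms(3) by (intro sum_strict_mono_ex1[OF assms(1)]) (auto simp: column_op_def)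
qed

lemma sum_insert_fun_upd:
  assumes "finite I" "i \<notin> I"
  shows "(\<Sum>k\<in>insert i I. (z(i := t)) k * f k) = t * f i + (\<Sum>k\<in>I. z k * f k)"
proof -
  have "(\<Sum>k\<in>I. (z(i := t)) k * f k) = (\<Sum>k\<in>I. z k * f k)"
    using assms(2) by (intro sum.cong) auto
  then show ?thesis using assms by simp
qed

lemma padic_dual_single_entry_row:
  fixes M :: "'i \<Rightarrow> 'j \<Rightarrow> int"
  assumes "padic_dual p (insert i I) J M c" "finite I" "i \<notin> I"
    and "j0 \<in> J" "M i j0 \<noteq> 0" "\<forall>j\<in>J - {j0}. M i j = 0"
  shows "padic_rat p (c i / of_int (M i j0))"
proof -
  let ?z = "(\<lambda>_. 0)(i := 1 / of_int (M i j0) :: real)"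
  have "(\<Sum>k\<in>insert i I. ?z k * of_int (M k j)) \<in> \<int>" if "j \<in> J" for j
    using that assms(4-6) unfolding sum_insert_fun_upd[OF assms(2,3)] by (cases "j = j0") auto
  then have "padic_rat p (\<Sum>k\<in>insert i I. ?z k * c k)"
    using assms(1) unfolding padic_dual_def by blast
  then show ?thesis unfolding sum_insert_fun_upd[OF assms(2,3)] by simp
qed

lemma padic_dual_eliminate_column:
  fixes M :: "'i \<Rightarrow> 'j \<Rightarrow> int"
  assumes "padic_dual p (insert i I) J M c" "finite I" "i \<notin> I"
    and "j0 \<in> J" "M i j0 \<noteq> 0" "\<forall>j\<in>J - {j0}. M i j = 0"
  shows "padic_dual p I (J - {j0}) M (\<lambda>k. c k - of_int (M k j0) * (c i / of_int (M i j0)))"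
  unfolding padic_dual_def
proof (intro allI impI)
  fix z :: "'i \<Rightarrow> real"
  assume int: "\<forall>j\<in>J - {j0}. (\<Sum>k\<in>I. z k * of_int (M k j)) \<in> \<int>"
  define t where "t = - (\<Sum>k\<in>I. z k * of_int (M k j0)) / of_int (M i j0)"
  have "(\<Sum>k\<in>insert i I. (z(i := t)) k * of_int (M k j)) \<in> \<int>" if "j \<in> J" for j
  proof (cases "j = j0")
    case True
    then show ?thesis using assms(5) unfolding sum_insert_fun_upd[OF assms(2,3)] by (simp add: t_def)
  next
    case False
    then show ?thesis
      using assms(6) bspec[OF int, of j] that unfolding sum_insert_fun_upd[OF assms(2,3)] by simp
  qed
  then have "padic_rat p (\<Sum>k\<in>insert i I. (z(i := t)) k * c k)"
    using assms(1) unfolding padic_dual_def by blast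
  moreover have "(\<Sum>k\<in>insert i I. (z(i := t)) k * c k) =
      (\<Sum>k\<in>I. z k * (c k - of_int (M k j0) * (c i / of_int (M i j0))))"
    using assms(5) unfolding sum_insert_fun_upd[OF assms(2,3)]
    by (simp add: t_def algebra_simps sum_subtractf sum_distrib_left sum_divide_distrib)
  ultimately show "padic_rat p (\<Sum>k\<in>I. z k * (c k - of_int (M k j0) * (c i / of_int (M i j0))))"
    by simp
qed

lemma solves_insert_single_entry_row:
  fixes M :: "'i \<Rightarrow> 'j \<Rightarrow> int"
  assumes "finite J" "j0 \<in> J" "M i j0 \<noteq> 0" "\<forall>j\<in>J - {j0}. M i j = 0" "i \<notin> I"
    and "of_int (M i j0) * x0 = c i"
  shows "solves (insert i I) J M c x \<longleftrightarrow>
    x j0 = x0 \<and> solves I (J - {j0}) M (\<lambda>k. c k - of_int (M k j0) * x0) x"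
proof -
  have split: "(\<Sum>j\<in>J. of_int (M k j) * x j) = of_int (M k j0) * x j0 + (\<Sum>j\<in>J - {j0}. of_int (M k j) * x j)"
    for k
    using assms(1,2) by (rule sum.remove)
  have "(\<Sum>j\<in>J - {j0}. of_int (M i j) * x j) = 0" using assms(4) by simp
  then have "(\<Sum>j\<in>J. of_int (M i j) * x j) = c i \<longleftrightarrow> of_int (M i j0) * x j0 = of_int (M i j0) * x0"
    using split[of i] assms(6) by simp
  also have "\<dots> \<longleftrightarrow> x j0 = x0" using assms(3) by simp
  finally have "(\<Sum>j\<in>J. of_int (M i j) * x j) = c i \<longleftrightarrow> x j0 = x0" .
  then show ?thesis unfolding solves_def using split by (auto simp: algebra_simps)
qed

lemma padic_solutions_dense_insert_single_entry_row:
  fixes M :: "'i \<Rightarrow> 'j \<Rightarrow> int"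
  assumes "finite J" "j0 \<in> J" "M i j0 \<noteq> 0" "\<forall>j\<in>J - {j0}. M i j = 0" "i \<notin> I"
    and "of_int (M i j0) * x0 = c i" "padic_rat p x0"
    and dense: "padic_solutions_dense p I (J - {j0}) M (\<lambda>k. c k - of_int (M k j0) * x0)"
  shows "padic_solutions_dense p (insert i I) J M c"
  unfolding padic_solutions_dense_def
proof (intro allI impI)
  let ?c = "\<lambda>k. c k - of_int (M k j0) * x0"
  note solves_iff = solves_insert_single_entry_row[where M = M and i = i and c = c, OF assms(1-6)]
  have solves_upd: "solves I (J - {j0}) M ?c (x(j0 := x0)) \<longleftrightarrow> solves I (J - {j0}) M ?c x" for x
    unfolding solves_def by (intro ball_cong refl arg_cong2[where f = "(=)"] sum.cong) auto
  fix y :: "'j \<Rightarrow> real" and e :: real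
  assume "solves (insert i I) J M c y" "e > 0"
  then have "y j0 = x0" "solves I (J - {j0}) M ?c y" using solves_iff by auto
  then obtain x where x: "padic_on p (J - {j0}) x" "solves I (J - {j0}) M ?c x"
    and close: "\<forall>j\<in>J - {j0}. \<bar>x j - y j\<bar> < e"
    using dense \<open>e > 0\<close> unfolding padic_solutions_dense_def by blast
  have "padic_on p J (x(j0 := x0))" using x(1) assms(7) by (auto simp: padic_on_def)
  moreover have "solves (insert i I) J M c (x(j0 := x0))" using x(2) solves_iff solves_upd by simp
  moreover have "\<forall>j\<in>J. \<bar>(x(j0 := x0)) j - y j\<bar> < e" using close \<open>y j0 = x0\<close> \<open>e > 0\<close> by auto
  ultimately show "\<exists>x. padic_on p J x \<and> solves (insert i I) J M c x \<and> (\<forall>j\<in>J. \<bar>x j - y j\<bar> < e)"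
    by blast
qed

lemma nonzero_entries_cases:
  fixes r :: "'j \<Rightarrow> int"
  obtains (zero) "\<forall>j\<in>J. r j = 0"
    | (single) j0 where "j0 \<in> J" "r j0 \<noteq> 0" "\<forall>j\<in>J - {j0}. r j = 0"
    | (two) a b where "a \<in> J" "b \<in> J" "a \<noteq> b" "r a \<noteq> 0" "\<bar>r a\<bar> \<le> \<bar>r b\<bar>"
proof (cases "\<forall>j\<in>J. r j = 0")
  case False
  then obtain j0 where j0: "j0 \<in> J" "r j0 \<noteq> 0" by blast
  show ?thesis
  proof (cases "\<forall>j\<in>J - {j0}. r j = 0")
    case False
    then obtain j1 where j1: "j1 \<in> J" "j1 \<noteq> j0" "r j1 \<noteq> 0" by blast
    show ?thesis
    proof (cases "\<bar>r j0\<bar> \<le> \<bar>r j1\<bar>")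
      case True
      with j0 j1 two[of j0 j1] show ?thesis by blast
    next
      case False
      with j0 j1 two[of j1 j0] show ?thesis by auto
    qed
  qed (use j0 single in blast)
qed (use zero in blast)

lemma padic_solutions_dense_insert_row:
  fixes M :: "'i \<Rightarrow> 'j \<Rightarrow> int"
  assumes IH: "\<And>J (M :: 'i \<Rightarrow> 'j \<Rightarrow> int) c. finite J \<Longrightarrow> padic_dual p I J M c \<Longrightarrow>
      padic_solutions_dense p I J M c"
    and "p > 0" "finite I" "i \<notin> I" "finite J" "padic_dual p (insert i I) J M c"
  shows "padic_solutions_dense p (insert i I) J M c"
  using assms(6)
proof (induction "\<Sum>j\<in>J. nat \<bar>M i j\<bar>" arbitrary: M rule: less_induct)
  \<comment> \<open>Euclid's algorithm on row \<open>i\<close>: column operations shrink it until at most one entry is nonzero\<close>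
  case less
  show ?case
  proof (cases rule: nonzero_entries_cases[of J "M i"])
    case zero
    have "padic_dual p I J M c" using padic_dual_subset[OF less.prems] assms(3) by blast
    with assms(5) have "padic_solutions_dense p I J M c" by (rule IH)
    then show ?thesis by (rule padic_solutions_dense_insert_zero_row[where M = M, OF zero])
  next
    case (single j0)
    define x0 where "x0 = c i / of_int (M i j0)"
    have "of_int (M i j0) * x0 = c i" using single(2) by (simp add: x0_def)
    moreover have "padic_rat p x0"
      unfolding x0_def by (rule padic_dual_single_entry_row[OF less.prems assms(3,4) single])
    moreover have "padic_solutions_dense p I (J - {j0}) M (\<lambda>k. c k - of_int (M k j0) * x0)"
      unfolding x0_def
      using assms(5) padic_dual_eliminate_column[OF less.prems assms(3,4) single] by (rule IH[OF finite_Diff])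
    ultimately show ?thesis
      by (rule padic_solutions_dense_insert_single_entry_row[where M = M and i = i and c = c,
        OF assms(5) single(1-3) assms(4)])
  next
    case (two a b)
    let ?s = "sgn (M i a * M i b)"
    have "(\<Sum>j\<in>J. nat \<bar>column_op M a b ?s i j\<bar>) < (\<Sum>j\<in>J. nat \<bar>M i j\<bar>)"
      using assms(5) two(1,2,4,5) by (rule column_op_decreases_row_weight)
    moreover have "padic_dual p (insert i I) J (column_op M a b ?s) c"
      using less.prems two(1-3) by (rule padic_dual_column_op)
    ultimately have "padic_solutions_dense p (insert i I) J (column_op M a b ?s) c"
      by (rule less.hyps)
    then show ?thesis using assms(2,5) two(1-3) by (rule padic_solutions_dense_column_op)
  qed
qed

theorem padic_solutions_dense_if_padic_dual:
  fixes M :: "'i \<Rightarrow> 'j \<Rightarrow> int"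
  assumes "1 < p" "finite I" "finite J" "padic_dual p I J M c"
  shows "padic_solutions_dense p I J M c"
  using assms(2-4)
proof (induction I arbitrary: J M c rule: finite_induct)
  case empty
  show ?case using padic_solutions_dense_empty[OF assms(1)] .
next
  case (insert i I)
  show ?case
    using padic_solutions_dense_insert_row[OF insert.IH _ insert.hyps(1,2) insert.prems] assms(1)
    by simp
qed

section \<open>Faces of integer polyhedra\<close>

definition real_row :: "int ^ 'n ^ 'm \<Rightarrow> 'm \<Rightarrow> real ^ 'n"
  where "real_row A i = (\<chi> j. of_int (A $ i $ j))"

lemma inner_real_row: "real_row A i \<bullet> x = (\<Sum>j\<in>UNIV. of_int (A $ i $ j) * x $ j)"
  by (simp add: real_row_def inner_vec_def)

lemma mem_polyh: "x \<in> polyh A b \<longleftrightarrow> (\<forall>i. real_row A i \<bullet> x \<le> of_int (b $ i))"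
  by (simp add: polyh_def inner_real_row)

lemma mem_tight_rows: "i \<in> tight_rows A b F \<longleftrightarrow> (\<forall>x\<in>F. real_row A i \<bullet> x = of_int (b $ i))"
  by (simp add: tight_rows_def inner_real_row)

lemma convex_polyh: "convex (polyh A b)"
proof -
  have "polyh A b = (\<Inter>i. {x. real_row A i \<bullet> x \<le> of_int (b $ i)})"
    by (auto simp: mem_polyh)
  then show ?thesis by (simp add: convex_INT convex_halfspace_le)
qed

lemma rational_polyhedron_polyh:
  fixes A :: "int ^ 'n ^ 'm" and b :: "int ^ 'm"
  shows "rational_polyhedron (polyh A b)"
proof -
  obtain rows :: "'m list" where "set rows = UNIV" using finite_list[of "UNIV :: 'm set"] by auto
  define cs where "cs = map (\<lambda>i. (real_row A i, real_of_int (b $ i))) rows"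
  have "\<forall>(a, \<beta>) \<in> set cs. (\<forall>i. a $ i \<in> \<rat>) \<and> \<beta> \<in> \<rat>"
    by (auto simp: cs_def real_row_def)
  moreover have "polyh A b = {x. \<forall>(a, \<beta>) \<in> set cs. a \<bullet> x \<le> \<beta>}"
    using \<open>set rows = UNIV\<close> by (auto simp: cs_def mem_polyh)
  ultimately show ?thesis unfolding rational_polyhedron_def by blast
qed

lemma inner_row_combination:
  "(\<chi> j. \<Sum>i\<in>T. u i * of_int (A $ i $ j)) \<bullet> x = (\<Sum>i\<in>T. u i * (real_row A i \<bullet> x))"
  by (simp add: inner_vec_def real_row_def sum_distrib_left sum_distrib_right sum.swap[of _ T]
      mult.assoc)

lemma rel_interior_inner_less:
  fixes F :: "'a::euclidean_space set"
  assumes "convex F" "\<And>x. x \<in> F \<Longrightarrow> a \<bullet> x \<le> \<beta>" "y \<in> rel_interior F" "x \<in> F" "a \<bullet> x < \<beta>"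
  shows "a \<bullet> y < \<beta>"
proof (rule ccontr)
  assume "\<not> a \<bullet> y < \<beta>"
  then have "y \<in> F \<inter> {x. a \<bullet> x = \<beta>}"
    using assms(2,3) rel_interior_subset by fastforce
  then have "F \<subseteq> F \<inter> {x. a \<bullet> x = \<beta>}"
    using assms(3) by (intro subset_of_face_of[OF face_of_Int_supporting_hyperplane_le[OF assms(1,2)]])
      auto
  then show False using assms(4,5) by auto
qed

lemma face_of_reflection_mem:
  assumes "F face_of S" "y \<in> F" "x \<in> S" "2 *\<^sub>R y - x \<in> S"
  shows "x \<in> F"
proof (cases "x = y")
  case False
  have "y = midpoint x (2 *\<^sub>R y - x)" by (simp add: midpoint_def algebra_simps)
  moreover have "x \<noteq> 2 *\<^sub>R y - x"
  proof
    assume "x = 2 *\<^sub>R y - x"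
    then have "(2::real) *\<^sub>R x = 2 *\<^sub>R y" by (simp add: algebra_simps scaleR_2)
    then show False using False by simp
  qed
  ultimately have "y \<in> open_segment x (2 *\<^sub>R y - x)" by (metis midpoint_in_open_segment)
  then show ?thesis using face_ofD[OF assms(1)] assms(2-4) by blast
qed (use assms(2) in simp)

lemma padic_solutions_dense_vec:
  fixes y :: "real ^ 'n"
  assumes "padic_solutions_dense p I UNIV M c" "solves I UNIV M c (($) y)" "r > 0"
  obtains x where "padic_vec p x" "solves I UNIV M c (($) x)" "dist x y < r"
proof -
  have "r / CARD('n) > 0" using assms(3) by simp
  then obtain x where x: "padic_on p UNIV x" "solves I UNIV M c x"
    and close: "\<forall>j. \<bar>x j - y $ j\<bar> < r / CARD('n)"
    using assms(1,2) unfolding padic_solutions_dense_def by blast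
  have "dist (vec_lambda x) y \<le> (\<Sum>j\<in>UNIV. \<bar>x j - y $ j\<bar>)"
    using norm_le_l1_cart[of "vec_lambda x - y"] by (simp add: dist_norm)
  also have "\<dots> < sum (\<lambda>_::'n. r / CARD('n)) UNIV"
    using close by (intro sum_strict_mono) auto
  also have "\<dots> = r" by simp
  finally have "dist (vec_lambda x) y < r" .
  moreover have "($) (vec_lambda x) = x" by auto
  ultimately show ?thesis
    using x by (intro that[of "vec_lambda x"]) (auto simp: padic_vec_def padic_on_def)
qed

lemma tight_solutions_near_rel_interior_subset_polyh:
  fixes A :: "int ^ 'n ^ 'm" and b :: "int ^ 'm"
  assumes "F face_of polyh A b" "y \<in> rel_interior F"
  obtains r where "r > 0"
    "ball y r \<inter> {u. \<forall>i\<in>tight_rows A b F. real_row A i \<bullet> u = of_int (b $ i)} \<subseteq> polyh A b"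
proof -
  let ?T = "tight_rows A b F"
  have FP: "F \<subseteq> polyh A b" using assms(1) face_of_imp_subset by blast
  define U where "U = (\<Inter>i\<in>- ?T. {u. real_row A i \<bullet> u < of_int (b $ i)})"
  have "open U" unfolding U_def by (auto intro!: open_INT open_halfspace_lt)
  moreover have "y \<in> U"
    unfolding U_def
  proof (intro InterI, clarsimp)
    fix i assume "i \<notin> ?T"
    then obtain x where "x \<in> F" "real_row A i \<bullet> x \<noteq> of_int (b $ i)"
      unfolding mem_tight_rows by blast
    have bound: "real_row A i \<bullet> x' \<le> of_int (b $ i)" if "x' \<in> F" for x'
      using FP that mem_polyh by blast
    have "real_row A i \<bullet> x < of_int (b $ i)"
      using bound[OF \<open>x \<in> F\<close>] \<open>real_row A i \<bullet> x \<noteq> of_int (b $ i)\<close> by linarith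
    then show "real_row A i \<bullet> y < of_int (b $ i)"
      using rel_interior_inner_less[OF face_of_imp_convex[OF assms(1)] bound assms(2) \<open>x \<in> F\<close>] by blast
  qed
  ultimately obtain r where "r > 0" "ball y r \<subseteq> U" by (meson open_contains_ball)
  moreover have "u \<in> polyh A b"
    if "u \<in> ball y r" and u_tight: "\<forall>i\<in>?T. real_row A i \<bullet> u = of_int (b $ i)" for u
    unfolding mem_polyh
  proof
    fix i
    show "real_row A i \<bullet> u \<le> of_int (b $ i)"
    proof (cases "i \<in> ?T")
      case False
      have "u \<in> U" using that(1) \<open>ball y r \<subseteq> U\<close> by blast
      then show ?thesis using False unfolding U_def by (auto intro: less_imp_le)
    qed (use u_tight in simp)
  qed
  ultimately show ?thesis using that by blast
qed

lemma face_of_polyh_padic_point: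
  fixes A :: "int ^ 'n ^ 'm" and b :: "int ^ 'm"
  assumes "1 < p" "F face_of polyh A b" "F \<noteq> {}"
    and dual: "\<And>z :: real ^ 'm. (\<forall>j. (\<Sum>i\<in>tight_rows A b F. z $ i * of_int (A $ i $ j)) \<in> \<int>) \<Longrightarrow>
      padic_rat p (\<Sum>i\<in>tight_rows A b F. z $ i * of_int (b $ i))"
  shows "\<exists>x\<in>F. padic_vec p x"
proof -
  let ?T = "tight_rows A b F"
  let ?M = "\<lambda>i j. A $ i $ j" and ?c = "\<lambda>i. real_of_int (b $ i)"
  let ?E = "{u. \<forall>i\<in>?T. real_row A i \<bullet> u = of_int (b $ i)}"
  have solves_iff: "solves ?T UNIV ?M ?c (($) x) \<longleftrightarrow> x \<in> ?E" for x
    by (simp add: solves_def inner_real_row)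
  have "padic_dual p ?T UNIV ?M ?c"
    unfolding padic_dual_def using dual[of "vec_lambda _"] by simp
  then have dense: "padic_solutions_dense p ?T UNIV ?M ?c"
    by (intro padic_solutions_dense_if_padic_dual assms(1)) auto
  obtain y where y: "y \<in> rel_interior F"
    using assms(2,3) face_of_imp_convex rel_interior_eq_empty by blast
  then have "y \<in> F" "y \<in> ?E" using rel_interior_subset mem_tight_rows by blast+
  obtain r where "r > 0" and near: "ball y r \<inter> ?E \<subseteq> polyh A b"
    using tight_solutions_near_rel_interior_subset_polyh[OF assms(2) y] by blast
  have "solves ?T UNIV ?M ?c (($) y)" using solves_iff \<open>y \<in> ?E\<close> by blast
  then obtain x where "padic_vec p x" "solves ?T UNIV ?M ?c (($) x)" "dist x y < r"
    by (rule padic_solutions_dense_vec[OF dense _ \<open>r > 0\<close>])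
  then have "x \<in> ?E" using solves_iff by blast
  have reflect: "y - (2 *\<^sub>R y - x) = x - y" by (simp add: scaleR_2)
  have "2 *\<^sub>R y - x \<in> ball y r"
    unfolding mem_ball dist_norm reflect using \<open>dist x y < r\<close> by (simp add: dist_norm)
  moreover have "2 *\<^sub>R y - x \<in> ?E"
    using \<open>x \<in> ?E\<close> \<open>y \<in> ?E\<close> by (simp add: inner_diff_right)
  moreover have "x \<in> ball y r" using \<open>dist x y < r\<close> by (simp add: dist_commute)
  ultimately have "x \<in> polyh A b" "2 *\<^sub>R y - x \<in> polyh A b" using near \<open>x \<in> ?E\<close> by blast+
  then have "x \<in> F" using face_of_reflection_mem[OF assms(2) \<open>y \<in> F\<close>] by blast
  then show ?thesis using \<open>padic_vec p x\<close> by blast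
qed

section \<open>Optimisation over integer polyhedra\<close>

lemma Sup_inner_eq_is_max_sol:
  "is_max_sol P w x \<Longrightarrow> Sup ((\<lambda>y. w \<bullet> y) ` P) = w \<bullet> x"
  unfolding is_max_sol_def by (intro cSup_eq_maximum) auto

lemma padic_max_sol_if_faces_padic:
  assumes "convex P" "is_max_sol P w x"
    and "\<And>F. F face_of P \<Longrightarrow> F \<noteq> {} \<Longrightarrow> \<exists>x\<in>F. padic_vec p x"
  shows "\<exists>x. is_max_sol P w x \<and> padic_vec p x"
proof -
  let ?F = "P \<inter> {y. w \<bullet> y = w \<bullet> x}"
  have "?F face_of P"
    using assms(1,2) by (intro face_of_Int_supporting_hyperplane_le) (auto simp: is_max_sol_def)
  moreover have "x \<in> ?F" using assms(2) by (auto simp: is_max_sol_def)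
  ultimately obtain x' where "x' \<in> ?F" "padic_vec p x'" using assms(3) by blast
  then show ?thesis using assms(2) by (auto simp: is_max_sol_def)
qed

lemma padic_rat_Sup_if_padic_max_sol:
  assumes "p > 0" "is_max_sol P (\<chi> j. of_int (w $ j)) x" "padic_vec p x"
  shows "padic_rat p (Sup ((\<lambda>x. (\<chi> j. of_int (w $ j)) \<bullet> x) ` P))"
  unfolding Sup_inner_eq_is_max_sol[OF assms(2)] using assms(1,3) by (intro padic_rat_inner_Ints) auto

lemma padic_rhs_combination_if_padic_in_affine_hull:
  fixes A :: "int ^ 'n ^ 'm" and b :: "int ^ 'm" and z :: "real ^ 'm"
  assumes "p > 0" "\<exists>x \<in> affine hull F. padic_vec p x"
    and "\<forall>j. (\<Sum>i\<in>tight_rows A b F. z $ i * of_int (A $ i $ j)) \<in> \<int>"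
  shows "padic_rat p (\<Sum>i\<in>tight_rows A b F. z $ i * of_int (b $ i))"
proof -
  let ?T = "tight_rows A b F"
  obtain x where x: "x \<in> affine hull F" "padic_vec p x" using assms(2) by blast
  have "real_row A i \<bullet> x = of_int (b $ i)" if "i \<in> ?T" for i
  proof -
    have "F \<subseteq> {y. real_row A i \<bullet> y = of_int (b $ i)}" using that mem_tight_rows by blast
    then have "affine hull F \<subseteq> {y. real_row A i \<bullet> y = of_int (b $ i)}"
      by (rule hull_minimal) (rule affine_hyperplane)
    then show ?thesis using x(1) by blast
  qed
  then have "(\<Sum>i\<in>?T. z $ i * of_int (b $ i)) = (\<chi> j. \<Sum>i\<in>?T. z $ i * of_int (A $ i $ j)) \<bullet> x"
    by (simp add: inner_row_combination)
  moreover have "padic_rat p ((\<chi> j. \<Sum>i\<in>?T. z $ i * of_int (A $ i $ j)) \<bullet> x)"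
    using assms(1,3) x(2) by (intro padic_rat_inner_Ints) auto
  ultimately show ?thesis by simp
qed

lemma is_max_sol_tight_combination:
  fixes A :: "int ^ 'n ^ 'm" and b :: "int ^ 'm"
  assumes "F \<subseteq> polyh A b" "x \<in> F" "\<And>i. u i \<ge> 0"
  defines "w \<equiv> \<chi> j. \<Sum>i\<in>tight_rows A b F. u i * of_int (A $ i $ j)"
  shows "is_max_sol (polyh A b) w x" and "w \<bullet> x = (\<Sum>i\<in>tight_rows A b F. u i * of_int (b $ i))"
proof -
  show w_value: "w \<bullet> x = (\<Sum>i\<in>tight_rows A b F. u i * of_int (b $ i))"
    unfolding w_def inner_row_combination using assms(2) by (intro sum.cong) (auto simp: mem_tight_rows)
  have "w \<bullet> y \<le> w \<bullet> x" if "y \<in> polyh A b" for y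
    unfolding w_value unfolding w_def inner_row_combination
    using that assms(3) by (intro sum_mono mult_left_mono) (auto simp: mem_polyh)
  then show "is_max_sol (polyh A b) w x" using assms(1,2) by (auto simp: is_max_sol_def)
qed

lemma padic_rhs_combination_if_int_optima_padic:
  fixes A :: "int ^ 'n ^ 'm" and b :: "int ^ 'm" and z :: "real ^ 'm"
  assumes "p > 0" "F \<subseteq> polyh A b" "F \<noteq> {}"
    and optima: "\<And>w :: int ^ 'n. (\<exists>x. is_max_sol (polyh A b) (\<chi> j. of_int (w $ j)) x) \<Longrightarrow>
        padic_rat p (Sup ((\<lambda>x. (\<chi> j. of_int (w $ j)) \<bullet> x) ` polyh A b))"
    and int: "\<forall>j. (\<Sum>i\<in>tight_rows A b F. z $ i * of_int (A $ i $ j)) \<in> \<int>"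
  shows "padic_rat p (\<Sum>i\<in>tight_rows A b F. z $ i * of_int (b $ i))"
proof -
  let ?T = "tight_rows A b F"
  \<comment> \<open>shifting \<open>z\<close> by an integer keeps the row combination integral and makes it a nonnegative
    combination, hence an integral objective maximised on \<open>F\<close>\<close>
  define k where "k = \<lceil>\<Sum>i\<in>UNIV. \<bar>z $ i\<bar>\<rceil>"
  define u where "u i = z $ i + of_int k" for i
  have u_nonneg: "u i \<ge> 0" for i
  proof -
    have "\<bar>z $ i\<bar> \<le> (\<Sum>i\<in>UNIV. \<bar>z $ i\<bar>)" by (rule member_le_sum) auto
    also have "\<dots> \<le> of_int k" unfolding k_def by (rule le_of_int_ceiling)
    finally show ?thesis unfolding u_def by linarith
  qed
  have shift: "(\<Sum>i\<in>?T. u i * of_int (A $ i $ j)) =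
      (\<Sum>i\<in>?T. z $ i * of_int (A $ i $ j)) + of_int (k * (\<Sum>i\<in>?T. A $ i $ j))" for j
    by (simp add: u_def algebra_simps sum.distrib sum_distrib_left)
  have u_int: "(\<Sum>i\<in>?T. u i * of_int (A $ i $ j)) \<in> \<int>" for j
    unfolding shift using int by (intro Ints_add Ints_of_int) blast
  have "of_int \<lfloor>\<Sum>i\<in>?T. u i * of_int (A $ i $ j)\<rfloor> = (\<Sum>i\<in>?T. u i * of_int (A $ i $ j))" for j
    using u_int[of j] by (auto elim!: Ints_cases)
  then obtain w :: "int ^ 'n" where w: "(\<chi> j. of_int (w $ j)) = (\<chi> j. \<Sum>i\<in>?T. u i * of_int (A $ i $ j))"
    by (intro that[of "\<chi> j. \<lfloor>\<Sum>i\<in>?T. u i * of_int (A $ i $ j)\<rfloor>"]) (simp add: vec_eq_iff)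
  obtain x where "x \<in> F" using assms(3) by blast
  note max = is_max_sol_tight_combination[where u = u, OF assms(2) \<open>x \<in> F\<close> u_nonneg, folded w]
  have "padic_rat p (Sup ((\<lambda>x. (\<chi> j. of_int (w $ j)) \<bullet> x) ` polyh A b))"
    using max(1) by (intro optima) blast
  then have "padic_rat p (\<Sum>i\<in>?T. u i * of_int (b $ i))"
    unfolding Sup_inner_eq_is_max_sol[OF max(1)] max(2) .
  moreover have "(\<Sum>i\<in>?T. z $ i * of_int (b $ i)) =
      (\<Sum>i\<in>?T. u i * of_int (b $ i)) - of_int (k * (\<Sum>i\<in>?T. b $ i))"
    by (simp add: u_def algebra_simps sum.distrib sum_distrib_left)
  ultimately show ?thesis by (metis padic_rat_diff[OF assms(1) _ padic_rat_of_int])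
qed

theorem theorem5p2:
  fixes A :: "int ^ 'n ^ 'm" and b :: "int ^ 'm" and p :: nat
  assumes "prime p"
    and "polyh A b \<noteq> {}"
  defines "P \<equiv> polyh A b"
  defines "S1 \<equiv> padic_polyhedron p P"
    and "S2 \<equiv> (\<forall>F. F face_of P \<and> F \<noteq> {} \<longrightarrow> (\<exists>x \<in> affine hull F. padic_vec p x))"
    and "S3 \<equiv> (\<forall>F. F face_of P \<and> F \<noteq> {} \<longrightarrow>
               (\<forall>z :: real ^ 'm.
                  (\<forall>j. (\<Sum>i\<in>tight_rows A b F. z $ i * of_int (A $ i $ j)) \<in> \<int>) \<longrightarrow>
                  padic_rat p (\<Sum>i\<in>tight_rows A b F. z $ i * of_int (b $ i))))"
    and "S4 \<equiv> (\<forall>w :: real ^ 'n. (\<exists>x. is_max_sol P w x) \<longrightarrow>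
               (\<exists>x. is_max_sol P w x \<and> padic_vec p x))"
    and "S5 \<equiv> (\<forall>w :: int ^ 'n. (\<exists>x. is_max_sol P (\<chi> j. of_int (w $ j)) x) \<longrightarrow>
               padic_rat p (Sup ((\<lambda>x. (\<chi> j. of_int (w $ j)) \<bullet> x) ` P)))"
  shows "(S1 \<longleftrightarrow> S2) \<and> (S1 \<longleftrightarrow> S3) \<and> (S1 \<longleftrightarrow> S4) \<and> (S1 \<longleftrightarrow> S5)"
proof -
  have "1 < p" "0 < p" using prime_gt_1_nat[OF assms(1)] by auto
  have S1_iff: "S1 \<longleftrightarrow> (\<forall>F. F face_of P \<and> F \<noteq> {} \<longrightarrow> (\<exists>x\<in>F. padic_vec p x))"
    using assms(2) rational_polyhedron_polyh unfolding S1_def padic_polyhedron_def P_def by blast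
  have "S1 \<Longrightarrow> S2" unfolding S1_iff S2_def by (meson hull_inc)
  moreover have "S2 \<Longrightarrow> S3"
    unfolding S2_def S3_def
    by (intro allI impI padic_rhs_combination_if_padic_in_affine_hull[OF \<open>0 < p\<close>]) blast+
  moreover have "S3 \<Longrightarrow> S1"
    unfolding S1_iff S3_def P_def by (intro allI impI face_of_polyh_padic_point[OF \<open>1 < p\<close>]) auto
  moreover have "S1 \<Longrightarrow> S4"
    unfolding S1_iff S4_def P_def using padic_max_sol_if_faces_padic[OF convex_polyh] by blast
  moreover have "S4 \<Longrightarrow> S5"
    unfolding S4_def S5_def using padic_rat_Sup_if_padic_max_sol[OF \<open>0 < p\<close>] by blast
  moreover have "S5 \<Longrightarrow> S3"
    unfolding S5_def S3_def P_def
    using padic_rhs_combination_if_int_optima_padic[where A = A and b = b, OF \<open>0 < p\<close> face_of_imp_subset]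
    by blast
  ultimately show ?thesis by blast
qed

end
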